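(* Let $(W,S)$ be a Coxeter group with Coxeter matrix $(m_{s,s'})$, let $w\in W$, let $(s,t)\in\mathfrak{M}$, and let $\vec a,\vec b$ be reduced expressions for $w$ such that $\vec b$ is obtained from $\vec a$ by an $(s,t)$-braid move. Let $q\in W$ be such that $\operatorname{Invs}\vec b$ is obtained from $\operatorname{Invs}\vec a$ by replacing a particular factor of the form $q\rho_{s,t}q^{-1}$ by its reversal (such $q$ exists). Set $s'=qsq^{-1}$ and $t'=qtq^{-1}$ (so $(s',t'),(t',s')\in\mathfrak{N}$). Then $$\operatorname{Has}\vec b=\operatorname{Has}\vec a-(s',t')+(t',s')\quad\text{in }\mathbb{Z}[\mathfrak{N}].$$
   Context: $(W,S)$ is a Coxeter group (generators $S$, relations $(st)^{m_{s,t}}=1$ for $m_{s,t}<\infty$, $m_{s,s}=1$, $m_{s,t}=m_{t,s}\ge2$ for $s\ne t$). $T=\bigcup_{x\in W}xSx^{-1}$. For distinct $u,v\in T$, $m_{u,v}$ is the order of $uv$ and, if finite, $\rho_{u,v}=((uv)^0u,(uv)^1u,\ldots,(uv)^{m_{u,v}-1}u)$; $q\rho q^{-1}$ means conjugating each entry by $q$. $\mathfrak{M}=\{(s,t)\in S\times S: s\ne t,\ m_{s,t}<\infty\}$ and $\mathfrak{N}=\bigcup_{x\in W}x\mathfrak{M}x^{-1}\subseteq T\times T$ (conjugating both entries). Reduced expression: tuple $(a_1,\ldots,a_k)\in S^k$ with $w=a_1\cdots a_k$, $k$ minimal. An $(s,t)$-braid move replaces a contiguous factor $(s,t,s,\ldots)$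 of length $m_{s,t}$ by $(t,s,t,\ldots)$ of length $m_{s,t}$. $\operatorname{Invs}(a_1,\ldots,a_k)=(t_1,\ldots,t_k)$, $t_i=(a_1\cdots a_{i-1})a_i(a_1\cdots a_{i-1})^{-1}$. For $(u,v)\in\mathfrak{N}$ and a reduced expression $\vec a$, $\operatorname{has}_{u,v}\vec a=1$ if $\rho_{u,v}$ appears as a (not necessarily contiguous) subword of $\operatorname{Invs}\vec a$, and $0$ otherwise. $\mathbb{Z}[\mathfrak{N}]$ is the free $\mathbb{Z}$-module with basis $\mathfrak{N}$ and $\operatorname{Has}\vec a=\sum_{(u,v)\in\mathfrak{N}}\operatorname{has}_{u,v}\vec a\cdot(u,v)$. *)

theory Defs
  imports "HOL-Algebra.Multiplicative_Group" "HOL-Algebra.Generated_Groups"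
    "HOL-Library.Sublist" "HOL-Library.Extended_Nat"
begin

definition wprod :: "('g, 'b) monoid_scheme \<Rightarrow> 'g list \<Rightarrow> 'g" where
  "wprod G xs = foldr (\<lambda>x y. x \<otimes>\<^bsub>G\<^esub> y) xs \<one>\<^bsub>G\<^esub>"

definition alt :: "'g \<Rightarrow> 'g \<Rightarrow> nat \<Rightarrow> 'g list" where
  "alt s t k = map (\<lambda>i. if even i then s else t) [0..<k]"

inductive cox_rel :: "'g set \<Rightarrow> ('g \<Rightarrow> 'g \<Rightarrow> enat) \<Rightarrow> 'g list \<Rightarrow> 'g list \<Rightarrow> bool"
  for S m where
  refl: "x \<in> lists S \<Longrightarrow> cox_rel S m x x"
| sym: "cox_rel S m x y \<Longrightarrow> cox_rel S m y x"
| trans: "cox_rel S m x y \<Longrightarrow> cox_rel S m y z \<Longrightarrow> cox_rel S m x z"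
| square: "u \<in> lists S \<Longrightarrow> v \<in> lists S \<Longrightarrow> s \<in> S \<Longrightarrow>
     cox_rel S m (u @ [s, s] @ v) (u @ v)"
| braid: "u \<in> lists S \<Longrightarrow> v \<in> lists S \<Longrightarrow> s \<in> S \<Longrightarrow> t \<in> S \<Longrightarrow> s \<noteq> t \<Longrightarrow>
     m s t = enat k \<Longrightarrow> cox_rel S m (u @ alt s t (2 * k) @ v) (u @ v)"

(* (G,S) is a Coxeter system with Coxeter matrix m: G is the group presented by
   generators S and relations (s t)^{m s t} = 1 *)
definition coxeter_system ::
  "('g, 'b) monoid_scheme \<Rightarrow> 'g set \<Rightarrow> ('g \<Rightarrow> 'g \<Rightarrow> enat) \<Rightarrow> bool" where
  "coxeter_system G S m \<longleftrightarrow>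
     group G \<and> S \<subseteq> carrier G \<and> generate G S = carrier G \<and>
     (\<forall>s\<in>S. m s s = 1) \<and>
     (\<forall>s\<in>S. \<forall>t\<in>S. m s t = m t s) \<and>
     (\<forall>s\<in>S. \<forall>t\<in>S. s \<noteq> t \<longrightarrow> m s t \<ge> 2) \<and>
     (\<forall>x\<in>lists S. \<forall>y\<in>lists S. wprod G x = wprod G y \<longleftrightarrow> cox_rel S m x y)"

definition reflections :: "('g, 'b) monoid_scheme \<Rightarrow> 'g set \<Rightarrow> 'g set" where
  "reflections G S = {x \<otimes>\<^bsub>G\<^esub> s \<otimes>\<^bsub>G\<^esub> inv\<^bsub>G\<^esub> x | x s. x \<in> carrier G \<and> s \<in> S}"

definition rho :: "('g, 'b) monoid_scheme \<Rightarrow> 'g \<Rightarrow> 'g \<Rightarrow> 'g list" where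
  "rho G u v = map (\<lambda>i. (u \<otimes>\<^bsub>G\<^esub> v) [^]\<^bsub>G\<^esub> i \<otimes>\<^bsub>G\<^esub> u) [0..<group.ord G (u \<otimes>\<^bsub>G\<^esub> v)]"

definition conj :: "('g, 'b) monoid_scheme \<Rightarrow> 'g \<Rightarrow> 'g \<Rightarrow> 'g" where
  "conj G q x = q \<otimes>\<^bsub>G\<^esub> x \<otimes>\<^bsub>G\<^esub> inv\<^bsub>G\<^esub> q"

definition frakM :: "'g set \<Rightarrow> ('g \<Rightarrow> 'g \<Rightarrow> enat) \<Rightarrow> ('g \<times> 'g) set" where
  "frakM S m = {(s, t). s \<in> S \<and> t \<in> S \<and> s \<noteq> t \<and> m s t \<noteq> \<infinity>}"

definition frakN ::
  "('g, 'b) monoid_scheme \<Rightarrow> 'g set \<Rightarrow> ('g \<Rightarrow> 'g \<Rightarrow> enat) \<Rightarrow> ('g \<times> 'g) set" where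
  "frakN G S m = {(conj G x s, conj G x t) | x s t. x \<in> carrier G \<and> (s, t) \<in> frakM S m}"

definition reduced_expr :: "('g, 'b) monoid_scheme \<Rightarrow> 'g set \<Rightarrow> 'g list \<Rightarrow> 'g \<Rightarrow> bool" where
  "reduced_expr G S a w \<longleftrightarrow> a \<in> lists S \<and> wprod G a = w \<and>
     (\<forall>b\<in>lists S. wprod G b = w \<longrightarrow> length a \<le> length b)"

definition braid_move ::
  "('g \<Rightarrow> 'g \<Rightarrow> enat) \<Rightarrow> 'g \<Rightarrow> 'g \<Rightarrow> 'g list \<Rightarrow> 'g list \<Rightarrow> bool" where
  "braid_move m s t a b \<longleftrightarrow> (\<exists>u v k. m s t = enat k \<and>
     a = u @ alt s t k @ v \<and> b = u @ alt t s k @ v)"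

definition invs :: "('g, 'b) monoid_scheme \<Rightarrow> 'g list \<Rightarrow> 'g list" where
  "invs G a = map (\<lambda>i. conj G (wprod G (take i a)) (a ! i)) [0..<length a]"

definition has :: "('g, 'b) monoid_scheme \<Rightarrow> 'g \<Rightarrow> 'g \<Rightarrow> 'g list \<Rightarrow> int" where
  "has G u v a = (if subseq (rho G u v) (invs G a) then 1 else 0)"

(* Has a, as an element of Z[N] represented by its coefficient function
   (supported on N) *)
definition Has ::
  "('g, 'b) monoid_scheme \<Rightarrow> 'g set \<Rightarrow> ('g \<Rightarrow> 'g \<Rightarrow> enat) \<Rightarrow> 'g list \<Rightarrow> ('g \<times> 'g \<Rightarrow> int)" where
  "Has G S m a = (\<lambda>(u, v). if (u, v) \<in> frakN G S m then has G u v a else 0)"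

end

theory Submission
  imports Defs
begin

(*
  Reduced expressions have reflection sequences without repetitions: the parity of the number of
  occurrences of a reflection is invariant under the Coxeter relations, and a repeated reflection
  lets one delete two letters.  Let X = rho_{s',t'} be the block that the braid move reverses, and
  let rho_{u,v}, (u, v) in N, occur as a subsequence.  If rho_{u,v} meets X in at most one entry,
  reversing X does not affect it.  If it meets X twice, it meets it in two consecutive entries,
  so u and v lie in the dihedral reflection subgroup W' generated by s' and t'.  A minimal coset
  representative argument then shows that u and v generate W' as well, so rho_{u,v} and X both
  list the reflections of W' (its elements of odd length) and distinctness forces rho_{u,v} = X.
  Hence reversing X removes exactly (s', t') and adds exactly (t', s').
*)

section \<open>Words and sublists\<close>

lemma wprod_Nil [simp]: "wprod G [] = \<one>\<^bsub>G\<^esub>"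
  by (simp add: wprod_def)

lemma wprod_Cons [simp]: "wprod G (x # xs) = x \<otimes>\<^bsub>G\<^esub> wprod G xs"
  by (simp add: wprod_def)

lemma invs_Nil [simp]: "invs G [] = []"
  by (simp add: invs_def)

lemma alt_0 [simp]: "alt s t 0 = []"
  by (simp add: alt_def)

lemma length_alt [simp]: "length (alt s t n) = n"
  by (simp add: alt_def)

lemma nth_alt [simp]: "i < n \<Longrightarrow> alt s t n ! i = (if even i then s else t)"
  by (simp add: alt_def)

lemma set_alt_subset: "set (alt s t n) \<subseteq> {s, t}"
  by (auto simp: alt_def)

lemma alt_Suc: "alt s t (Suc n) = s # alt t s n"
  by (rule nth_equalityI) (auto simp: nth_Cons split: nat.splits)

lemma alt_snoc: "alt s t (Suc n) = alt s t n @ [if even n then s else t]"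
  by (rule nth_equalityI) (auto simp: nth_append less_Suc_eq)

lemma alt_add_even: "alt s t (2 * k + j) = alt s t (2 * k) @ alt s t j"
  by (rule nth_equalityI) (auto simp: nth_append)

lemma count_list_distinct: "distinct xs \<Longrightarrow> x \<in> set xs \<Longrightarrow> count_list xs x = 1"
  by (induction xs) auto

lemma split_at_two_indices:
  assumes "i < j" "j < length xs"
  shows "xs = take i xs @ xs ! i # take (j - Suc i) (drop (Suc i) xs) @ xs ! j # drop (Suc j) xs"
proof -
  have "drop (Suc i) xs = take (j - Suc i) (drop (Suc i) xs) @ xs ! j # drop (Suc j) xs"
    using assms id_take_nth_drop[of "j - Suc i" "drop (Suc i) xs"] by simp
  then show ?thesis
    using assms id_take_nth_drop[of i xs] by simp
qed

lemma set_subseq_subset: "subseq xs ys \<Longrightarrow> set xs \<subseteq> set ys"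
  by (induction rule: list_emb.induct) auto

lemma subseq_distinct: "subseq xs ys \<Longrightarrow> distinct ys \<Longrightarrow> distinct xs"
  by (induction rule: list_emb.induct) (auto dest: set_subseq_subset)

lemma subseq_eq_if_set_subset:
  assumes "subseq xs ys" "distinct ys" "set ys \<subseteq> set xs"
  shows "xs = ys"
proof -
  have "length ys \<le> length xs"
    using assms(2,3) card_mono[of "set xs" "set ys"] card_length[of xs] by (simp add: distinct_card)
  then show ?thesis
    using list_emb_length[OF assms(1)] subseq_same_length[OF assms(1)] by simp
qed

lemma subseq_middle_self: "subseq L (U @ L @ V)"
  by (intro subseq_drop_many prefix_imp_subseq) simp

lemma subseq_middle_eq:
  assumes sub: "subseq R (U @ L @ V)" and d: "distinct (U @ L @ V)" and R: "set R = set L"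
  shows "R = L"
proof -
  obtain \<alpha> \<beta> \<gamma> where R_eq: "R = \<alpha> @ \<beta> @ \<gamma>"
    and sub_\<alpha>: "subseq \<alpha> U" and sub_\<beta>: "subseq \<beta> L" and sub_\<gamma>: "subseq \<gamma> V"
    using sub by (auto elim!: subseq_appendE)
  have "set \<alpha> \<subseteq> set U \<inter> set L" "set \<gamma> \<subseteq> set V \<inter> set L"
    using R_eq R set_subseq_subset[OF sub_\<alpha>] set_subseq_subset[OF sub_\<gamma>] by auto
  moreover have "set U \<inter> set L = {}" "set V \<inter> set L = {}"
    using d by auto
  ultimately have "R = \<beta>"
    using R_eq by simp
  then show ?thesis
    using R d sub_\<beta> subseq_eq_if_set_subset[of \<beta> L] by simp
qed

lemma subseq_middle_swap:
  assumes sub: "subseq R (U @ L @ V)" and d: "distinct L"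
    and meet: "card (set R \<inter> set L) \<le> 1" and L': "set L' = set L"
  shows "subseq R (U @ L' @ V)"
proof -
  obtain \<alpha> \<beta> \<gamma> where R_eq: "R = \<alpha> @ \<beta> @ \<gamma>"
    and sub_\<alpha>: "subseq \<alpha> U" and sub_\<beta>: "subseq \<beta> L" and sub_\<gamma>: "subseq \<gamma> V"
    using sub by (auto elim!: subseq_appendE)
  have \<beta>: "set \<beta> \<subseteq> set R \<inter> set L"
    using R_eq set_subseq_subset[OF sub_\<beta>] by auto
  then have "length \<beta> \<le> 1"
    using meet subseq_distinct[OF sub_\<beta> d] card_mono[of "set R \<inter> set L" "set \<beta>"]
    by (simp add: distinct_card)
  then consider "\<beta> = []" | b where "\<beta> = [b]"
    by (cases \<beta>) auto
  then have "subseq \<beta> L'"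
    by cases (use \<beta> L' in \<open>auto simp: subseq_singleton_left\<close>)
  then show ?thesis
    using R_eq sub_\<alpha> sub_\<gamma> by (simp add: list_emb_append_mono)
qed

lemma not_subseq_rev_middle:
  assumes "distinct (U @ L @ V)" "rev L \<noteq> L"
  shows "\<not> subseq (rev L) (U @ L @ V)"
  using subseq_middle_eq[of "rev L" U L V] assms by auto

lemma subseq_middle_consecutive:
  assumes sub: "subseq R (U @ L @ V)" and d: "distinct (U @ L @ V)"
    and meet: "2 \<le> card (set R \<inter> set L)"
  obtains i where "Suc i < length R" "R ! i \<in> set L" "R ! Suc i \<in> set L"
proof -
  obtain \<alpha> \<beta> \<gamma> where R_eq: "R = \<alpha> @ \<beta> @ \<gamma>"
    and sub_\<alpha>: "subseq \<alpha> U" and sub_\<beta>: "subseq \<beta> L" and sub_\<gamma>: "subseq \<gamma> V"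
    using sub by (auto elim!: subseq_appendE)
  have "set \<alpha> \<inter> set L = {}" "set \<gamma> \<inter> set L = {}"
    using d set_subseq_subset[OF sub_\<alpha>] set_subseq_subset[OF sub_\<gamma>] by auto
  then have "set R \<inter> set L \<subseteq> set \<beta>"
    using R_eq by auto
  then have "2 \<le> length \<beta>"
    using meet card_mono[of "set \<beta>" "set R \<inter> set L"] card_length[of \<beta>] by simp
  moreover have "set \<beta> \<subseteq> set L"
    by (rule set_subseq_subset[OF sub_\<beta>])
  moreover have "\<beta> ! 0 \<in> set \<beta>" "\<beta> ! 1 \<in> set \<beta>"
    using \<open>2 \<le> length \<beta>\<close> by (intro nth_mem, linarith)+
  ultimately have "\<beta> ! 0 \<in> set L" "\<beta> ! 1 \<in> set L"
    by auto
  moreover have "\<beta> \<noteq> []"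
    using \<open>2 \<le> length \<beta>\<close> by auto
  ultimately show thesis
    using that[of "length \<alpha>"] R_eq \<open>2 \<le> length \<beta>\<close> by (simp add: nth_append)
qed

section \<open>Words, conjugation and reflection sequences in a group\<close>

context group
begin

lemma inv_mult_cancel_left [simp]: "x \<in> carrier G \<Longrightarrow> y \<in> carrier G \<Longrightarrow> inv x \<otimes> (x \<otimes> y) = y"
  by (simp flip: m_assoc)

lemma mult_inv_cancel_left [simp]: "x \<in> carrier G \<Longrightarrow> y \<in> carrier G \<Longrightarrow> x \<otimes> (inv x \<otimes> y) = y"
  by (simp flip: m_assoc)

lemma involution_cancel_left: "a \<in> carrier G \<Longrightarrow> b \<in> carrier G \<Longrightarrow> a \<otimes> a = \<one> \<Longrightarrow> a \<otimes> (a \<otimes> b) = b"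
  by (simp flip: m_assoc)

lemma wprod_closed [simp]: "set xs \<subseteq> carrier G \<Longrightarrow> wprod G xs \<in> carrier G"
  by (induction xs) auto

lemma wprod_append:
  "set xs \<subseteq> carrier G \<Longrightarrow> set ys \<subseteq> carrier G \<Longrightarrow> wprod G (xs @ ys) = wprod G xs \<otimes> wprod G ys"
  by (induction xs) (auto simp: m_assoc)

lemma wprod_in_generate: "xs \<in> lists A \<Longrightarrow> wprod G xs \<in> generate G A"
  by (induction xs) (auto intro: generate.one generate.incl generate.eng)

lemma generate_involutions_words:
  assumes A: "A \<subseteq> carrier G" "\<And>a. a \<in> A \<Longrightarrow> a \<otimes> a = \<one>" and g: "g \<in> generate G A"
  shows "\<exists>xs\<in>lists A. wprod G xs = g"
  using g
proof induction
  case one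
  then show ?case by (auto intro!: bexI[of _ "[]"])
next
  case (incl h)
  then show ?case using A(1) by (auto intro!: bexI[of _ "[h]"])
next
  case (inv h)
  then have "inv h = h"
    using A inv_equality[of h h] by blast
  then show ?case using inv A(1) by (auto intro!: bexI[of _ "[h]"])
next
  case (eng h1 h2)
  then obtain xs ys where "xs \<in> lists A" "ys \<in> lists A" "wprod G xs = h1" "wprod G ys = h2"
    by blast
  moreover from this have "set xs \<subseteq> carrier G" "set ys \<subseteq> carrier G"
    using A(1) by auto
  ultimately show ?case by (auto simp: wprod_append intro!: bexI[of _ "xs @ ys"])
qed

lemma exists_shortest_word:
  assumes "A \<subseteq> carrier G" "\<And>a. a \<in> A \<Longrightarrow> a \<otimes> a = \<one>" "g \<in> generate G A"
  obtains xs where "xs \<in> lists A" "wprod G xs = g"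
    "\<And>ys. ys \<in> lists A \<Longrightarrow> wprod G ys = g \<Longrightarrow> length xs \<le> length ys"
proof -
  obtain xs where "xs \<in> lists A \<and> wprod G xs = g"
    using generate_involutions_words[OF assms] by blast
  from ex_has_least_nat[of "\<lambda>xs. xs \<in> lists A \<and> wprod G xs = g", OF this, of length]
  show thesis using that by blast
qed

lemma conj_closed [simp]: "a \<in> carrier G \<Longrightarrow> b \<in> carrier G \<Longrightarrow> conj G a b \<in> carrier G"
  by (simp add: conj_def)

lemma conj_one [simp]: "b \<in> carrier G \<Longrightarrow> conj G \<one> b = b"
  by (simp add: conj_def)

lemma conj_one_right [simp]: "a \<in> carrier G \<Longrightarrow> conj G a \<one> = \<one>"
  by (simp add: conj_def)

lemma conj_mult:
  "a \<in> carrier G \<Longrightarrow> b \<in> carrier G \<Longrightarrow> c \<in> carrier G \<Longrightarrow> conj G (a \<otimes> b) c = conj G a (conj G b c)"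
  by (simp add: conj_def m_assoc inv_mult_group)

lemma conj_mult_distrib:
  "a \<in> carrier G \<Longrightarrow> b \<in> carrier G \<Longrightarrow> c \<in> carrier G \<Longrightarrow> conj G a (b \<otimes> c) = conj G a b \<otimes> conj G a c"
  by (simp add: conj_def m_assoc)

lemma conj_inv: "a \<in> carrier G \<Longrightarrow> b \<in> carrier G \<Longrightarrow> conj G a (inv b) = inv (conj G a b)"
  by (simp add: conj_def m_assoc inv_mult_group)

lemma conj_inv_conj [simp]: "a \<in> carrier G \<Longrightarrow> b \<in> carrier G \<Longrightarrow> conj G (inv a) (conj G a b) = b"
  by (simp add: conj_def m_assoc)

lemma conj_conj_inv [simp]: "a \<in> carrier G \<Longrightarrow> b \<in> carrier G \<Longrightarrow> conj G a (conj G (inv a) b) = b"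
  by (simp add: conj_def m_assoc)

lemma conj_cancel [simp]:
  "a \<in> carrier G \<Longrightarrow> b \<in> carrier G \<Longrightarrow> c \<in> carrier G \<Longrightarrow> conj G a b = conj G a c \<longleftrightarrow> b = c"
  by (auto dest: arg_cong[where f = "conj G (inv a)"])

lemma conj_nat_pow: "a \<in> carrier G \<Longrightarrow> b \<in> carrier G \<Longrightarrow> conj G a (b [^] (n::nat)) = conj G a b [^] n"
  by (induction n) (simp_all add: conj_mult_distrib)

lemma conj_int_pow: "a \<in> carrier G \<Longrightarrow> b \<in> carrier G \<Longrightarrow> conj G a (b [^] (k::int)) = conj G a b [^] k"
  by (cases k rule: int_cases2) (simp_all add: int_pow_int int_pow_neg_int conj_nat_pow conj_inv)

lemma conj_involution:
  "a \<in> carrier G \<Longrightarrow> b \<in> carrier G \<Longrightarrow> b \<otimes> b = \<one> \<Longrightarrow> conj G a b \<otimes> conj G a b = \<one>"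
  by (simp flip: conj_mult_distrib)

lemma group_hom_conj: "a \<in> carrier G \<Longrightarrow> group_hom G G (conj G a)"
  by (auto simp: group_hom_def group_hom_axioms_def hom_def conj_mult_distrib is_group)

lemma generate_conj:
  "A \<subseteq> carrier G \<Longrightarrow> a \<in> carrier G \<Longrightarrow> generate G (conj G a ` A) = conj G a ` generate G A"
  using group_hom.generate_img[OF group_hom_conj] .

lemma subgroup_conj_closed: "subgroup H G \<Longrightarrow> g \<in> H \<Longrightarrow> h \<in> H \<Longrightarrow> conj G g h \<in> H"
  by (simp add: conj_def subgroup.m_closed subgroup.m_inv_closed)

lemma conj_image_subgroup:
  assumes H: "subgroup H G" and a: "a \<in> H"
  shows "conj G a ` H = H"
proof
  show "conj G a ` H \<subseteq> H"
    using subgroup_conj_closed[OF H a] by blast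
  show "H \<subseteq> conj G a ` H"
  proof
    fix h assume h: "h \<in> H"
    have "a \<in> carrier G" "h \<in> carrier G"
      using subgroup.mem_carrier[OF H] a h by auto
    then have "h = conj G a (conj G (inv a) h)"
      by simp
    then show "h \<in> conj G a ` H"
      using subgroup_conj_closed[OF H subgroup.m_inv_closed[OF H a] h] by blast
  qed
qed

lemma ord_conj:
  assumes "a \<in> carrier G" "b \<in> carrier G"
  shows "ord (conj G a b) = ord b"
proof -
  have "conj G a b [^] n = \<one> \<longleftrightarrow> b [^] n = \<one>" for n :: nat
    using assms by (metis conj_nat_pow conj_one_right conj_cancel nat_pow_closed one_closed)
  then show ?thesis
    using assms by (simp add: ord_unique pow_eq_id)
qed

lemma length_invs [simp]: "length (invs G xs) = length xs"
  by (simp add: invs_def)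

lemma nth_invs: "i < length xs \<Longrightarrow> invs G xs ! i = conj G (wprod G (take i xs)) (xs ! i)"
  by (simp add: invs_def)

lemma set_invs_subset: "set xs \<subseteq> carrier G \<Longrightarrow> set (invs G xs) \<subseteq> carrier G"
  by (auto simp: invs_def intro!: conj_closed wprod_closed dest: in_set_takeD)

lemma invs_Cons:
  assumes "set (x # xs) \<subseteq> carrier G"
  shows "invs G (x # xs) = x # map (conj G x) (invs G xs)"
proof (rule nth_equalityI)
  fix i assume "i < length (invs G (x # xs))"
  moreover have "set (take n xs) \<subseteq> carrier G" for n
    using assms by (meson set_take_subset set_subset_Cons subset_trans)
  moreover have "n < length xs \<Longrightarrow> xs ! n \<in> carrier G" for n
    using assms by auto
  ultimately show "invs G (x # xs) ! i = (x # map (conj G x) (invs G xs)) ! i"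
    using assms by (cases i) (auto simp: nth_invs conj_mult)
qed simp

lemma invs_append:
  assumes "set xs \<subseteq> carrier G" "set ys \<subseteq> carrier G"
  shows "invs G (xs @ ys) = invs G xs @ map (conj G (wprod G xs)) (invs G ys)"
  using assms(1)
proof (induction xs)
  case Nil
  have "map (conj G \<one>) (invs G ys) = invs G ys"
    by (rule map_idI) (use set_invs_subset[OF assms(2)] in auto)
  then show ?case by simp
next
  case (Cons x xs)
  then have c: "x \<in> carrier G" "set xs \<subseteq> carrier G"
    by auto
  have "invs G ((x # xs) @ ys) = x # map (conj G x) (invs G (xs @ ys))"
    using c assms(2) by (simp add: invs_Cons)
  also have "\<dots> = x # map (conj G x) (invs G xs @ map (conj G (wprod G xs)) (invs G ys))"
    using Cons.IH c by simp
  also have "\<dots> = (x # map (conj G x) (invs G xs)) @ map (conj G (x \<otimes> wprod G xs)) (invs G ys)"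
  proof -
    have "map (conj G x \<circ> conj G (wprod G xs)) (invs G ys) = map (conj G (x \<otimes> wprod G xs)) (invs G ys)"
      by (rule map_cong) (use c set_invs_subset[OF assms(2)] in \<open>auto simp: conj_mult\<close>)
    then show ?thesis by simp
  qed
  also have "\<dots> = invs G (x # xs) @ map (conj G (wprod G (x # xs))) (invs G ys)"
    using c by (simp add: invs_Cons)
  finally show ?case .
qed

lemma set_alt_subset_carrier: "s \<in> carrier G \<Longrightarrow> t \<in> carrier G \<Longrightarrow> set (alt s t n) \<subseteq> carrier G"
  using set_alt_subset[of s t n] by auto

lemma wprod_alt_double:
  assumes "s \<in> carrier G" "t \<in> carrier G"
  shows "wprod G (alt s t (2 * k)) = (s \<otimes> t) [^] k"
proof (induction k)
  case (Suc k)
  have "alt s t 2 = [s, t]"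
    by (simp only: numeral_2_eq_2 alt_Suc alt_0)
  then have "alt s t (2 * Suc k) = alt s t (2 * k) @ [s, t]"
    using alt_add_even[of s t k 2] by simp
  moreover have "set (alt s t (2 * k)) \<subseteq> carrier G"
    using assms by (rule set_alt_subset_carrier)
  ultimately show ?case
    using Suc assms by (simp add: wprod_append m_assoc)
qed simp

lemma invs_alt:
  assumes st: "s \<in> carrier G" "t \<in> carrier G" "s \<otimes> s = \<one>" "t \<otimes> t = \<one>" and "i < n"
  shows "invs G (alt s t n) ! i = wprod G (alt s t (2 * i + 1))"
  using assms
proof (induction i arbitrary: s t n)
  case 0
  then obtain n' where "n = Suc n'"
    by (cases n) auto
  moreover have "set (alt t s n') \<subseteq> carrier G"
    using 0 by (simp add: set_alt_subset_carrier)
  ultimately show ?case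
    using 0 by (simp add: alt_Suc invs_Cons)
next
  case (Suc i)
  then obtain n' where n: "n = Suc n'"
    by (cases n) auto
  have c: "set (alt t s n') \<subseteq> carrier G" "set (alt t s (2 * i + 1)) \<subseteq> carrier G"
    using Suc.prems by (simp_all add: set_alt_subset_carrier)
  have inv_s: "inv s = s"
    using Suc.prems by (simp add: inv_equality)
  have "invs G (alt s t n) ! Suc i = conj G s (invs G (alt t s n') ! i)"
    using c Suc.prems by (simp add: n alt_Suc invs_Cons)
  also have "\<dots> = s \<otimes> (wprod G (alt t s (2 * i + 1)) \<otimes> s)"
    using Suc c by (simp add: n conj_def inv_s m_assoc)
  also have "\<dots> = wprod G (alt s t (2 * Suc i + 1))"
  proof -
    have "2 * Suc i + 1 = Suc (Suc (2 * i + 1))"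
      by simp
    then have "alt s t (2 * Suc i + 1) = s # (alt t s (2 * i + 1) @ [s])"
      by (simp only: alt_Suc[of s t] alt_snoc[of t s "2 * i + 1"]) simp
    then show ?thesis
      using c Suc.prems by (simp add: wprod_append)
  qed
  finally show ?case .
qed

lemma invs_alt_double:
  assumes st: "s \<in> carrier G" "t \<in> carrier G" "s \<otimes> s = \<one>" "t \<otimes> t = \<one>"
    and k: "(s \<otimes> t) [^] k = \<one>"
  shows "invs G (alt s t (2 * k)) = take k (invs G (alt s t (2 * k))) @ take k (invs G (alt s t (2 * k)))"
proof (rule nth_equalityI)
  fix i assume i: "i < length (invs G (alt s t (2 * k)))"
  show "invs G (alt s t (2 * k)) ! i
      = (take k (invs G (alt s t (2 * k))) @ take k (invs G (alt s t (2 * k)))) ! i"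
  proof (cases "i < k")
    case False
    define j where "j = i - k"
    have ij: "i = k + j" "j < k"
      using False i by (auto simp: j_def)
    have c: "set (alt s t (2 * k)) \<subseteq> carrier G" "set (alt s t (2 * j + 1)) \<subseteq> carrier G"
      using st by (simp_all add: set_alt_subset_carrier)
    have "invs G (alt s t (2 * k)) ! i = wprod G (alt s t (2 * k + (2 * j + 1)))"
      using invs_alt[OF st, of i "2 * k"] ij by (simp add: algebra_simps)
    also have "\<dots> = wprod G (alt s t (2 * j + 1))"
      using c st k by (simp only: alt_add_even) (simp add: wprod_append wprod_alt_double)
    also have "\<dots> = invs G (alt s t (2 * k)) ! j"
      using invs_alt[OF st, of j "2 * k"] ij by simp
    finally show ?thesis
      using ij by (simp add: nth_append)
  qed (simp add: nth_append)
qed simp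

lemma even_count_invs_insert:
  assumes c: "set u \<subseteq> carrier G" "set x \<subseteq> carrier G" "set v \<subseteq> carrier G"
    and x: "wprod G x = \<one>" "invs G x = B @ B"
  shows "even (count_list (invs G (u @ x @ v)) r) \<longleftrightarrow> even (count_list (invs G (u @ v)) r)"
proof -
  have "map (conj G \<one>) (invs G v) = invs G v"
    by (rule map_idI) (use set_invs_subset[OF c(3)] in auto)
  then have "invs G (u @ x @ v)
      = invs G u @ map (conj G (wprod G u)) (B @ B) @ map (conj G (wprod G u)) (invs G v)"
    using c x by (simp add: invs_append wprod_append)
  moreover have "invs G (u @ v) = invs G u @ map (conj G (wprod G u)) (invs G v)"
    using c by (simp add: invs_append)
  ultimately have "count_list (invs G (u @ x @ v)) r
      = count_list (invs G (u @ v)) r + 2 * count_list (map (conj G (wprod G u)) B) r"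
    by simp
  then show ?thesis
    by simp
qed

lemma wprod_delete_pair:
  assumes c: "set A \<subseteq> carrier G" "set B \<subseteq> carrier G" "set C \<subseteq> carrier G"
    and ab: "a \<in> carrier G" "b \<in> carrier G" "a \<otimes> a = \<one>" "b \<otimes> b = \<one>"
    and eq: "conj G (wprod G A) a = conj G (wprod G (A @ a # B)) b"
  shows "wprod G (A @ a # B @ b # C) = wprod G (A @ B @ C)"
proof -
  define P Q R where "P = wprod G A" "Q = wprod G B" "R = wprod G C"
  have PQR: "P \<in> carrier G" "Q \<in> carrier G" "R \<in> carrier G"
    using c by (simp_all add: P_Q_R_def)
  have "conj G P a = conj G P (conj G (a \<otimes> Q) b)"
    using eq c ab by (simp add: P_Q_R_def wprod_append conj_mult)
  then have "a = conj G (a \<otimes> Q) b"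
    using PQR ab by simp
  then have "a \<otimes> (a \<otimes> Q) = conj G (a \<otimes> Q) b \<otimes> (a \<otimes> Q)"
    by simp
  also have "\<dots> = a \<otimes> (Q \<otimes> b)"
    using PQR ab by (simp add: conj_def m_assoc)
  also have "a \<otimes> (a \<otimes> Q) = Q"
    using PQR ab by (simp flip: m_assoc)
  finally have Q_eq: "Q = a \<otimes> (Q \<otimes> b)" .
  have "wprod G (A @ a # B @ b # C) = P \<otimes> (a \<otimes> (Q \<otimes> b) \<otimes> R)"
    using c ab by (simp add: P_Q_R_def wprod_append m_assoc)
  also have "\<dots> = P \<otimes> (Q \<otimes> R)"
    by (simp flip: Q_eq)
  also have "\<dots> = wprod G (A @ B @ C)"
    using c by (simp add: P_Q_R_def wprod_append)
  finally show ?thesis .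
qed

end

section \<open>Dihedral subgroups\<close>

context group
begin

lemma subgroup_nat_pow_closed: "subgroup H G \<Longrightarrow> h \<in> H \<Longrightarrow> h [^] (n::nat) \<in> H"
  by (induction n) (auto simp: subgroup.one_closed subgroup.m_closed)

lemma length_rho [simp]: "length (rho G u v) = ord (u \<otimes> v)"
  by (simp add: rho_def)

lemma nth_rho: "i < ord (u \<otimes> v) \<Longrightarrow> rho G u v ! i = (u \<otimes> v) [^] i \<otimes> u"
  by (simp add: rho_def)

lemma rho_conj:
  assumes "a \<in> carrier G" "u \<in> carrier G" "v \<in> carrier G"
  shows "map (conj G a) (rho G u v) = rho G (conj G a u) (conj G a v)"
proof -
  have ord_eq: "ord (conj G a u \<otimes> conj G a v) = ord (u \<otimes> v)"
    using assms by (simp add: ord_conj flip: conj_mult_distrib)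
  show ?thesis
    by (rule nth_equalityI) (use assms in \<open>simp_all add: ord_eq nth_rho conj_mult_distrib conj_nat_pow\<close>)
qed

lemma rev_rho:
  assumes uv: "u \<in> carrier G" "v \<in> carrier G" "u \<otimes> u = \<one>" "v \<otimes> v = \<one>"
  shows "rev (rho G u v) = rho G v u"
proof -
  define r where "r = u \<otimes> v"
  have r: "r \<in> carrier G"
    using uv by (simp add: r_def)
  have vu: "v \<otimes> u = inv r"
    using uv by (simp add: r_def inv_mult_group inv_equality)
  have ord_vu: "ord (v \<otimes> u) = ord r"
    using r by (simp add: vu)
  show ?thesis
  proof (rule nth_equalityI)
    fix i assume "i < length (rev (rho G u v))"
    then have i: "i < ord r"
      by (simp add: r_def)
    have "r [^] (ord r - Suc i) \<otimes> r [^] Suc i = \<one>"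
      by (simp only: nat_pow_mult[OF r]) (use i r in \<open>simp add: pow_ord_eq_1\<close>)
    then have "r [^] (ord r - Suc i) = inv r [^] i \<otimes> inv r"
      using r by (metis inv_equality nat_pow_Suc nat_pow_closed nat_pow_inv)
    moreover have "inv r \<otimes> u = v"
      using uv by (simp add: vu[symmetric] m_assoc)
    ultimately have "r [^] (ord r - Suc i) \<otimes> u = inv r [^] i \<otimes> v"
      using r uv by (simp add: m_assoc)
    then show "rev (rho G u v) ! i = rho G v u ! i"
      using i ord_vu by (simp add: rev_nth nth_rho vu flip: r_def)
  qed (simp add: ord_vu r_def)
qed

lemma rho_eq_imp_eq:
  assumes "u \<in> carrier G" "v \<in> carrier G" "x \<in> carrier G" "y \<in> carrier G"
    and eq: "rho G u v = rho G x y" and two: "2 \<le> ord (u \<otimes> v)"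
  shows "u = x \<and> v = y"
proof -
  have "2 \<le> ord (x \<otimes> y)"
    using eq two by (metis length_rho)
  moreover have "rho G u v ! 0 = rho G x y ! 0" "rho G u v ! 1 = rho G x y ! 1"
    using eq by simp_all
  ultimately have "u = x" "u \<otimes> v \<otimes> u = x \<otimes> y \<otimes> x"
    using assms(1-4) two by (simp_all add: nth_rho)
  then show ?thesis
    using assms by (simp add: m_assoc)
qed

lemma set_rho_subset_generate:
  assumes "u \<in> carrier G" "v \<in> carrier G"
  shows "set (rho G u v) \<subseteq> generate G {u, v}"
proof -
  have H: "subgroup (generate G {u, v}) G" and "u \<in> generate G {u, v}" "v \<in> generate G {u, v}"
    using assms by (auto intro: generate_is_subgroup generate.incl)
  then show ?thesis
    by (auto simp: rho_def intro!: subgroup.m_closed[OF H] subgroup_nat_pow_closed[OF H])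
qed

lemma rho_consecutive_in_subgroup:
  assumes H: "subgroup H G" and uv: "u \<in> carrier G" "v \<in> carrier G"
    and i: "Suc i < ord (u \<otimes> v)" and in_H: "rho G u v ! i \<in> H" "rho G u v ! Suc i \<in> H"
  shows "u \<in> H" "v \<in> H"
proof -
  define r where "r = u \<otimes> v"
  have r: "r \<in> carrier G"
    using uv by (simp add: r_def)
  have "rho G u v ! Suc i = r [^] Suc i \<otimes> u"
    using i by (simp add: nth_rho r_def)
  also have "\<dots> = r \<otimes> (r [^] i \<otimes> u)"
    by (simp only: nat_pow_Suc2[OF r]) (use r uv in \<open>simp add: m_assoc\<close>)
  finally have entries: "rho G u v ! i = r [^] i \<otimes> u" "rho G u v ! Suc i = r \<otimes> (r [^] i \<otimes> u)"
    using i by (simp_all add: nth_rho r_def)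
  then have "r = rho G u v ! Suc i \<otimes> inv (rho G u v ! i)"
    using r uv by (simp add: m_assoc)
  then have r_H: "r \<in> H"
    using H in_H by (simp add: subgroup.m_closed subgroup.m_inv_closed)
  have "u = inv (r [^] i) \<otimes> rho G u v ! i"
    using entries r uv by simp
  then show u_H: "u \<in> H"
    using subgroup.m_closed[OF H subgroup.m_inv_closed[OF H subgroup_nat_pow_closed[OF H r_H, of i]] in_H(1)]
    by simp
  have "v = inv u \<otimes> r"
    using uv by (simp add: r_def)
  then show "v \<in> H"
    using H u_H r_H by (simp add: subgroup.m_closed subgroup.m_inv_closed)
qed

lemma dihedral_mult_pow:
  assumes uv: "u \<in> carrier G" "v \<in> carrier G" "u \<otimes> u = \<one>" "v \<otimes> v = \<one>" and a: "a \<in> {u, v}"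
  shows "\<exists>j::int. a \<otimes> (u \<otimes> v) [^] (k::int) = (u \<otimes> v) [^] j \<otimes> u"
proof -
  define r where "r = u \<otimes> v"
  have r: "r \<in> carrier G"
    using uv by (simp add: r_def)
  have inv_u: "inv u = u" and inv_v: "inv v = v"
    using uv by (simp_all add: inv_equality)
  have "conj G u r = v \<otimes> u"
    using uv inv_u by (simp add: conj_def r_def flip: m_assoc)
  also have "\<dots> = inv r"
    using uv inv_u inv_v by (simp add: r_def inv_mult_group)
  finally have "conj G u (r [^] j) = r [^] (-j)" for j :: int
    using uv r by (simp add: conj_int_pow int_pow_inv int_pow_neg)
  then have conj_u: "u \<otimes> (r [^] j \<otimes> u) = r [^] (-j)" for j :: int
    using uv r inv_u by (simp add: conj_def m_assoc)
  have u_pow: "u \<otimes> r [^] j = r [^] (-j) \<otimes> u" for j :: int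
  proof -
    have "u \<otimes> r [^] j = u \<otimes> (r [^] j \<otimes> u) \<otimes> u"
      using uv r by (simp add: m_assoc)
    then show ?thesis
      by (simp add: conj_u)
  qed
  have "r [^] (1 + k) = r \<otimes> r [^] k"
    using int_pow_mult[OF r, of 1 k] r by simp
  then have "u \<otimes> r [^] (1 + k) = u \<otimes> (u \<otimes> (v \<otimes> r [^] k))"
    using uv r by (simp add: r_def m_assoc)
  then have "v \<otimes> r [^] k = u \<otimes> r [^] (1 + k)"
    using uv r by (simp add: involution_cancel_left)
  then show ?thesis
    using a u_pow by (auto simp: r_def)
qed

lemma dihedral_normal_form_int:
  assumes uv: "u \<in> carrier G" "v \<in> carrier G" "u \<otimes> u = \<one>" "v \<otimes> v = \<one>"
    and g: "g \<in> generate G {u, v}"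
  shows "\<exists>k::int. g = (u \<otimes> v) [^] k \<or> g = (u \<otimes> v) [^] k \<otimes> u"
proof -
  obtain xs where xs: "xs \<in> lists {u, v}" "wprod G xs = g"
    using generate_involutions_words[OF _ _ g] uv by auto
  have "\<exists>k::int. wprod G xs = (u \<otimes> v) [^] k \<or> wprod G xs = (u \<otimes> v) [^] k \<otimes> u"
    using xs(1)
  proof (induction xs)
    case Nil
    then show ?case
      by (auto intro!: exI[of _ 0])
  next
    case (Cons a xs)
    then obtain k :: int where k: "wprod G xs = (u \<otimes> v) [^] k \<or> wprod G xs = (u \<otimes> v) [^] k \<otimes> u"
      and a: "a \<in> {u, v}"
      by auto
    obtain j :: int where "a \<otimes> (u \<otimes> v) [^] k = (u \<otimes> v) [^] j \<otimes> u"
      using dihedral_mult_pow[OF uv a] by blast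
    moreover have "a \<in> carrier G"
      using a uv by auto
    ultimately show ?case
      using k uv by (auto simp: m_assoc simp flip: m_assoc[of a])
  qed
  then show ?thesis
    using xs(2) by simp
qed

lemma dihedral_normal_form:
  assumes uv: "u \<in> carrier G" "v \<in> carrier G" "u \<otimes> u = \<one>" "v \<otimes> v = \<one>"
    and g: "g \<in> generate G {u, v}" and ord: "0 < ord (u \<otimes> v)"
  shows "\<exists>k < ord (u \<otimes> v). g = (u \<otimes> v) [^] k \<or> g = (u \<otimes> v) [^] k \<otimes> u"
proof -
  obtain k :: int where k: "g = (u \<otimes> v) [^] k \<or> g = (u \<otimes> v) [^] k \<otimes> u"
    using dihedral_normal_form_int[OF uv g] by blast
  define n where "n = nat (k mod int (ord (u \<otimes> v)))"
  have "int (ord (u \<otimes> v)) dvd k mod int (ord (u \<otimes> v)) - k"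
    by (metis dvd_minus_iff dvd_minus_mod minus_diff_eq)
  then have "(u \<otimes> v) [^] k = (u \<otimes> v) [^] n"
    using uv ord by (simp add: n_def int_pow_eq flip: int_pow_int)
  moreover have "n < ord (u \<otimes> v)"
    using ord by (simp add: n_def nat_less_iff)
  ultimately show ?thesis
    using k by auto
qed

end

section \<open>Coxeter systems\<close>

locale coxeter = group G for G :: "('g, 'b) monoid_scheme" (structure) +
  fixes S :: "'g set" and m :: "'g \<Rightarrow> 'g \<Rightarrow> enat"
  assumes coxeter_system: "coxeter_system G S m"

context coxeter
begin

lemma S_subset_carrier: "S \<subseteq> carrier G"
  using coxeter_system by (simp add: coxeter_system_def)

lemma generate_S: "generate G S = carrier G"
  using coxeter_system by (simp add: coxeter_system_def)

lemma wprod_eq_iff_cox_rel: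
  "x \<in> lists S \<Longrightarrow> y \<in> lists S \<Longrightarrow> wprod G x = wprod G y \<longleftrightarrow> cox_rel S m x y"
  using coxeter_system by (simp add: coxeter_system_def)

lemma lists_S_subset_carrier: "x \<in> lists S \<Longrightarrow> set x \<subseteq> carrier G"
  using S_subset_carrier by auto

lemma S_involution: "s \<in> S \<Longrightarrow> s \<otimes> s = \<one>"
  using wprod_eq_iff_cox_rel[of "[s, s]" "[]"] cox_rel.square[of "[]" S "[]" s m] S_subset_carrier
  by auto

lemma exists_word_S: "g \<in> carrier G \<Longrightarrow> \<exists>x\<in>lists S. wprod G x = g"
  using generate_involutions_words[OF S_subset_carrier S_involution] generate_S by auto

lemma wprod_alt_double_frakM:
  assumes "(s, t) \<in> frakM S m" "m s t = enat k"
  shows "wprod G (alt s t (2 * k)) = \<one>"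
proof -
  have "cox_rel S m ([] @ alt s t (2 * k) @ []) ([] @ [])"
    using assms by (intro cox_rel.braid) (auto simp: frakM_def)
  moreover have "alt s t (2 * k) \<in> lists S"
    using assms set_alt_subset[of s t "2 * k"] by (auto simp: frakM_def)
  ultimately show ?thesis
    using wprod_eq_iff_cox_rel[of "alt s t (2 * k)" "[]"] by simp
qed

lemma two_le_ord_frakM:
  assumes st: "(s, t) \<in> frakM S m"
  shows "2 \<le> ord (s \<otimes> t)"
proof -
  have S: "s \<in> S" "t \<in> S" "s \<noteq> t"
    using st by (auto simp: frakM_def)
  then have c: "s \<in> carrier G" "t \<in> carrier G"
    using S_subset_carrier by auto
  obtain k where k: "m s t = enat k"
    using st by (auto simp: frakM_def)
  moreover have "2 \<le> m s t"
    using coxeter_system S by (auto simp: coxeter_system_def)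
  ultimately have "2 \<le> k"
    by (metis enat_ord_simps(1) numeral_eq_enat)
  moreover have "(s \<otimes> t) [^] k = \<one>"
    using wprod_alt_double_frakM[OF st k] wprod_alt_double[OF c] by simp
  then have "ord (s \<otimes> t) dvd k"
    using c by (simp add: pow_eq_id)
  with \<open>2 \<le> k\<close> have "ord (s \<otimes> t) \<noteq> 0"
    by (metis dvd_0_left_iff not_numeral_le_zero)
  moreover have "ord (s \<otimes> t) \<noteq> 1"
  proof
    assume "ord (s \<otimes> t) = 1"
    then have "s \<otimes> t = \<one>"
      using c pow_ord_eq_1[of "s \<otimes> t"] by simp
    then have "s \<otimes> t = s \<otimes> s"
      using S S_involution by simp
    then show False
      using S c by simp
  qed
  ultimately show ?thesis
    by linarith
qed

lemma conj_S_involution: "q \<in> carrier G \<Longrightarrow> s \<in> S \<Longrightarrow> conj G q s \<otimes> conj G q s = \<one>"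
  using S_subset_carrier S_involution by (auto intro: conj_involution)

lemma frakM_swap: "(s, t) \<in> frakM S m \<Longrightarrow> (t, s) \<in> frakM S m"
  using coxeter_system by (auto simp: frakM_def coxeter_system_def)

lemma frakN_conj: "(s, t) \<in> frakM S m \<Longrightarrow> q \<in> carrier G \<Longrightarrow> (conj G q s, conj G q t) \<in> frakN G S m"
  by (auto simp: frakN_def)

lemma frakNE:
  assumes "(u, v) \<in> frakN G S m"
  obtains y s t where "y \<in> carrier G" "(s, t) \<in> frakM S m" "u = conj G y s" "v = conj G y t"
  using assms by (auto simp: frakN_def)

lemma frakN_carrier: "(u, v) \<in> frakN G S m \<Longrightarrow> u \<in> carrier G \<and> v \<in> carrier G"
  using S_subset_carrier by (auto simp: frakN_def frakM_def)

lemma frakN_involutions: "(u, v) \<in> frakN G S m \<Longrightarrow> u \<otimes> u = \<one> \<and> v \<otimes> v = \<one>"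
  by (auto simp: frakN_def frakM_def conj_S_involution)

lemma frakN_swap: "(u, v) \<in> frakN G S m \<Longrightarrow> (v, u) \<in> frakN G S m"
  using frakM_swap by (fastforce simp: frakN_def)

lemma two_le_ord_frakN:
  assumes "(u, v) \<in> frakN G S m"
  shows "2 \<le> ord (u \<otimes> v)"
proof -
  obtain y s t where y: "y \<in> carrier G" and st: "(s, t) \<in> frakM S m"
    and uv: "u = conj G y s" "v = conj G y t"
    using assms by (rule frakNE)
  then have "s \<in> carrier G" "t \<in> carrier G"
    using S_subset_carrier by (auto simp: frakM_def)
  then have "u \<otimes> v = conj G y (s \<otimes> t)"
    using y by (simp add: uv conj_mult_distrib)
  then show ?thesis
    using two_le_ord_frakM[OF st] y \<open>s \<in> carrier G\<close> \<open>t \<in> carrier G\<close> by (simp add: ord_conj)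
qed

lemma frakN_neq:
  assumes N: "(u, v) \<in> frakN G S m"
  shows "u \<noteq> v"
proof
  assume "u = v"
  then have "u \<otimes> v = \<one>"
    using frakN_involutions[OF N] by simp
  then show False
    using two_le_ord_frakN[OF N] by simp
qed

lemma even_length_cox_rel: "cox_rel S m x y \<Longrightarrow> even (length x) \<longleftrightarrow> even (length y)"
  by (induction rule: cox_rel.induct) auto

lemma even_count_invs_cox_rel:
  "cox_rel S m x y \<Longrightarrow> even (count_list (invs G x) r) \<longleftrightarrow> even (count_list (invs G y) r)"
proof (induction rule: cox_rel.induct)
  case (square u v s)
  have "s \<in> carrier G" "s \<otimes> s = \<one>"
    using square S_subset_carrier S_involution by auto
  moreover have "conj G s s = s"
    using calculation by (simp add: conj_def inv_equality m_assoc)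
  ultimately have "wprod G [s, s] = \<one>" "invs G [s, s] = [s] @ [s]"
    by (simp_all add: invs_Cons)
  then show ?case
    using square lists_S_subset_carrier \<open>s \<in> carrier G\<close>
    by (intro even_count_invs_insert[where B = "[s]"]) auto
next
  case (braid u v s t k)
  have st: "s \<in> carrier G" "t \<in> carrier G" "s \<otimes> s = \<one>" "t \<otimes> t = \<one>"
    using braid S_subset_carrier S_involution by auto
  have "(s, t) \<in> frakM S m"
    using braid by (simp add: frakM_def)
  then have "wprod G (alt s t (2 * k)) = \<one>"
    using braid wprod_alt_double_frakM by blast
  moreover from this have "(s \<otimes> t) [^] k = \<one>"
    using st by (simp add: wprod_alt_double)
  ultimately show ?case
    using braid lists_S_subset_carrier st invs_alt_double[OF st]
    by (intro even_count_invs_insert) (auto simp: set_alt_subset_carrier)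
qed auto

definition word_length :: "'g \<Rightarrow> nat" where
  "word_length g = (LEAST n. \<exists>x\<in>lists S. length x = n \<and> wprod G x = g)"

lemma word_length_le: "x \<in> lists S \<Longrightarrow> word_length (wprod G x) \<le> length x"
  unfolding word_length_def by (rule Least_le) auto

lemma exists_reduced_word:
  assumes "g \<in> carrier G"
  obtains x where "x \<in> lists S" "length x = word_length g" "wprod G x = g"
proof -
  have "\<exists>n. \<exists>x\<in>lists S. length x = n \<and> wprod G x = g"
    using exists_word_S[OF assms] by blast
  from LeastI_ex[OF this] show thesis
    using that unfolding word_length_def by blast
qed

lemma word_length_one [simp]: "word_length \<one> = 0"
  using word_length_le[of "[]"] by simp

lemma even_word_length_wprod:
  assumes x: "x \<in> lists S"
  shows "even (word_length (wprod G x)) \<longleftrightarrow> even (length x)"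
proof -
  obtain y where y: "y \<in> lists S" "length y = word_length (wprod G x)" "wprod G y = wprod G x"
    using exists_reduced_word x lists_S_subset_carrier wprod_closed by metis
  then have "cox_rel S m y x"
    using x wprod_eq_iff_cox_rel by blast
  then show ?thesis
    using even_length_cox_rel[of y x] y(2) by simp
qed

lemma even_word_length_mult:
  assumes "a \<in> carrier G" "b \<in> carrier G"
  shows "even (word_length (a \<otimes> b)) \<longleftrightarrow> (even (word_length a) \<longleftrightarrow> even (word_length b))"
proof -
  obtain x y where xy: "x \<in> lists S" "y \<in> lists S" "wprod G x = a" "wprod G y = b"
    using exists_word_S assms by metis
  then have "wprod G (x @ y) = a \<otimes> b"
    using lists_S_subset_carrier by (simp add: wprod_append)
  then show ?thesis
    using xy even_word_length_wprod[of "x @ y"] even_word_length_wprod[of x]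
      even_word_length_wprod[of y]
    by auto
qed

lemma even_word_length_inv: "a \<in> carrier G \<Longrightarrow> even (word_length (inv a)) \<longleftrightarrow> even (word_length a)"
  using even_word_length_mult[of a "inv a"] by auto

lemma odd_word_length_S: "s \<in> S \<Longrightarrow> odd (word_length s)"
  using even_word_length_wprod[of "[s]"] S_subset_carrier by auto

lemma odd_word_length_conj_S:
  assumes "q \<in> carrier G" "s \<in> S"
  shows "odd (word_length (conj G q s))"
proof -
  have "s \<in> carrier G"
    using assms S_subset_carrier by auto
  then show ?thesis
    using assms odd_word_length_S by (simp add: conj_def even_word_length_mult even_word_length_inv)
qed

lemma even_word_length_pow:
  "x \<in> carrier G \<Longrightarrow> even (word_length x) \<Longrightarrow> even (word_length (x [^] (n::nat)))"
  by (induction n) (simp_all add: even_word_length_mult)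

lemma S_neq_one: "s \<in> S \<Longrightarrow> s \<noteq> \<one>"
  using odd_word_length_S by fastforce

lemma word_length_mult_S_le:
  assumes "s \<in> S" "g \<in> carrier G"
  shows "word_length (s \<otimes> g) \<le> word_length g + 1"
proof -
  obtain x where "x \<in> lists S" "length x = word_length g" "wprod G x = g"
    using exists_reduced_word[OF assms(2)] by blast
  then show ?thesis
    using word_length_le[of "s # x"] assms(1) by simp
qed

lemma nth_invs_mult_wprod:
  assumes x: "x \<in> lists S" and i: "i < length x"
  shows "invs G x ! i \<otimes> wprod G x = wprod G (take i x @ drop (Suc i) x)"
proof -
  define P R where "P = wprod G (take i x)" and "R = wprod G (drop (Suc i) x)"
  have c: "set (take i x) \<subseteq> carrier G" "set (drop (Suc i) x) \<subseteq> carrier G" "x ! i \<in> carrier G"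
    using x i lists_S_subset_carrier[OF x] by (auto dest: in_set_takeD in_set_dropD)
  have "x ! i \<in> S"
    using x i by (metis in_listsD nth_mem)
  then have xi: "x ! i \<otimes> x ! i = \<one>"
    by (rule S_involution)
  have "wprod G x = wprod G (take i x @ x ! i # drop (Suc i) x)"
    using id_take_nth_drop[OF i] by simp
  then have "invs G x ! i \<otimes> wprod G x = P \<otimes> x ! i \<otimes> inv P \<otimes> (P \<otimes> (x ! i \<otimes> R))"
    using c i by (simp add: nth_invs conj_def wprod_append P_def R_def)
  also have "\<dots> = P \<otimes> R"
    using c xi by (simp add: P_def R_def m_assoc flip: m_assoc[of "x ! i" "x ! i"])
  also have "\<dots> = wprod G (take i x @ drop (Suc i) x)"
    using c by (simp add: P_def R_def wprod_append)
  finally show ?thesis .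
qed

lemma not_distinct_invs_shorten:
  assumes x: "x \<in> lists S" and nd: "\<not> distinct (invs G x)"
  obtains x' where "set x' \<subseteq> set x" "length x' + 2 = length x" "wprod G x' = wprod G x"
proof -
  obtain i j where ij: "i < j" "j < length x" "invs G x ! i = invs G x ! j"
    using nd by (auto simp: distinct_conv_nth) (metis linorder_neqE_nat)
  define A B C where "A = take i x" and "B = take (j - Suc i) (drop (Suc i) x)"
    and "C = drop (Suc j) x"
  have x_eq: "x = A @ x ! i # B @ x ! j # C"
    unfolding A_def B_def C_def by (rule split_at_two_indices[OF ij(1,2)])
  have set_x: "set x = set A \<union> {x ! i} \<union> set B \<union> {x ! j} \<union> set C"
    by (subst (1) x_eq) auto
  have len: "length A = i" "length B = j - Suc i"
    using ij by (simp_all add: A_def B_def)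
  have "j = Suc (length A + length B)"
    using len ij by simp
  then have "take j x = A @ x ! i # B"
    by (subst (1) x_eq) simp
  then have "conj G (wprod G A) (x ! i) = conj G (wprod G (A @ x ! i # B)) (x ! j)"
    using ij by (simp add: nth_invs A_def)
  then have "wprod G (A @ x ! i # B @ x ! j # C) = wprod G (A @ B @ C)"
    using set_x lists_S_subset_carrier[OF x] x ij(1,2) S_involution
    by (intro wprod_delete_pair) auto
  then show thesis
    using that[of "A @ B @ C"] set_x arg_cong[OF x_eq, of length] arg_cong[OF x_eq, of "wprod G"]
    by auto
qed

lemma distinct_invs_if_shortest:
  assumes A: "A \<subseteq> S" and x: "x \<in> lists A"
    and shortest: "\<And>y. y \<in> lists A \<Longrightarrow> wprod G y = wprod G x \<Longrightarrow> length x \<le> length y"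
  shows "distinct (invs G x)"
proof (rule ccontr)
  assume nd: "\<not> distinct (invs G x)"
  have "x \<in> lists S"
    using x A by auto
  then obtain x' where x': "set x' \<subseteq> set x" "length x' + 2 = length x" "wprod G x' = wprod G x"
    using nd by (rule not_distinct_invs_shorten)
  then have "x' \<in> lists A"
    using x by auto
  then show False
    using shortest[of x'] x' by simp
qed

lemma reduced_expr_distinct_invs: "reduced_expr G S x g \<Longrightarrow> distinct (invs G x)"
  unfolding reduced_expr_def by (auto intro: distinct_invs_if_shortest[of S])

lemma length_le_if_distinct_invs:
  assumes x: "x \<in> lists S" and d: "distinct (invs G x)"
    and y: "y \<in> lists S" "wprod G y = wprod G x"
  shows "length x \<le> length y"
proof -
  have "cox_rel S m x y"
    using x y wprod_eq_iff_cox_rel[of x y] by simp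
  then have "odd (count_list (invs G y) r)" if "r \<in> set (invs G x)" for r
    using that d even_count_invs_cox_rel[of x y r] by (simp add: count_list_distinct)
  then have "set (invs G x) \<subseteq> set (invs G y)"
    by (metis count_notin even_zero subsetI)
  then have "card (set (invs G x)) \<le> card (set (invs G y))"
    by (simp add: card_mono)
  then show ?thesis
    using d card_length[of "invs G y"] by (simp add: distinct_card)
qed

lemma length_eq_word_length_if_distinct_invs:
  assumes x: "x \<in> lists S" and d: "distinct (invs G x)"
  shows "length x = word_length (wprod G x)"
proof -
  obtain y where "y \<in> lists S" "length y = word_length (wprod G x)" "wprod G y = wprod G x"
    using exists_reduced_word x lists_S_subset_carrier wprod_closed by metis
  then show ?thesis
    using length_le_if_distinct_invs[OF x d] word_length_le[OF x] by fastforce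
qed

end

section \<open>Minimal coset representatives and dihedral reflection subgroups\<close>

context coxeter
begin

lemma invs_subset_generate:
  assumes J: "J \<subseteq> S" and y: "y \<in> lists J"
  shows "set (invs G y) \<subseteq> generate G J"
proof
  fix r assume "r \<in> set (invs G y)"
  then obtain j where j: "j < length y" "r = conj G (wprod G (take j y)) (y ! j)"
    by (auto simp: in_set_conv_nth nth_invs)
  have "take j y \<in> lists J"
    using y by (auto dest: in_set_takeD)
  moreover have "y ! j \<in> J"
    using y j by (metis in_listsD nth_mem)
  moreover have "subgroup (generate G J) G"
    using J S_subset_carrier by (intro generate_is_subgroup) auto
  ultimately show "r \<in> generate G J"
    using j(2) subgroup_conj_closed wprod_in_generate generate.incl by metis
qed

lemma invs_disjoint_conj_generate:
  assumes J: "J \<subseteq> S" and x: "x \<in> lists S" "length x = word_length (wprod G x)"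
    and min: "\<And>g. g \<in> generate G J \<Longrightarrow> word_length (wprod G x) \<le> word_length (wprod G x \<otimes> g)"
    and h: "h \<in> generate G J"
  shows "conj G (wprod G x) h \<notin> set (invs G x)"
proof
  assume "conj G (wprod G x) h \<in> set (invs G x)"
  then obtain i where i: "i < length x" "invs G x ! i = conj G (wprod G x) h"
    by (auto simp: in_set_conv_nth)
  have c: "wprod G x \<in> carrier G" "h \<in> carrier G"
    using x J S_subset_carrier lists_S_subset_carrier generate_in_carrier[OF _ h] by auto
  have "wprod G x \<otimes> h = invs G x ! i \<otimes> wprod G x"
    using i c by (simp add: conj_def m_assoc)
  also have "\<dots> = wprod G (take i x @ drop (Suc i) x)"
    using nth_invs_mult_wprod[OF x(1) i(1)] .
  finally have "word_length (wprod G x \<otimes> h) \<le> length (take i x @ drop (Suc i) x)"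
    using x(1) word_length_le[of "take i x @ drop (Suc i) x"] by (auto dest: in_set_takeD in_set_dropD)
  then show False
    using min[OF h] x(2) i(1) by simp
qed

(* Reduced words for z and for v concatenate to a reduced word: their reflection sequences are
   disjoint by minimality of z. *)
lemma word_length_mult_min_coset_rep:
  assumes J: "J \<subseteq> S" and z: "z \<in> carrier G"
    and min: "\<And>g. g \<in> generate G J \<Longrightarrow> word_length z \<le> word_length (z \<otimes> g)"
    and y: "y \<in> lists J" and y_min: "\<And>y'. y' \<in> lists J \<Longrightarrow> wprod G y' = wprod G y \<Longrightarrow> length y \<le> length y'"
  shows "word_length (z \<otimes> wprod G y) = word_length z + length y"
proof -
  obtain x where x: "x \<in> lists S" "length x = word_length z" "wprod G x = z"
    using exists_reduced_word[OF z] by blast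
  have yS: "y \<in> lists S"
    using y J by auto
  have c: "set x \<subseteq> carrier G" "set y \<subseteq> carrier G"
    using lists_S_subset_carrier x(1) yS by auto
  then have "set (invs G y) \<subseteq> carrier G"
    using set_invs_subset by blast
  have "distinct (invs G x)"
  proof (rule distinct_invs_if_shortest[OF order_refl x(1)])
    fix x' assume "x' \<in> lists S" "wprod G x' = wprod G x"
    then show "length x \<le> length x'"
      using word_length_le[of x'] x by simp
  qed
  moreover have "distinct (invs G y)"
    using y y_min by (intro distinct_invs_if_shortest[OF J]) auto
  moreover have "set (invs G x) \<inter> conj G z ` set (invs G y) = {}"
    using invs_disjoint_conj_generate[OF J x(1)] invs_subset_generate[OF J y] x min by auto
  moreover have "inj_on (conj G z) (set (invs G y))"
    using z \<open>set (invs G y) \<subseteq> carrier G\<close> conj_cancel by (auto simp: inj_on_def subset_iff)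
  ultimately have "distinct (invs G (x @ y))"
    using c x by (simp add: invs_append distinct_map)
  moreover have "x @ y \<in> lists S"
    using x(1) yS by simp
  ultimately have "length (x @ y) = word_length (wprod G (x @ y))"
    by (intro length_eq_word_length_if_distinct_invs)
  then show ?thesis
    using c x by (simp add: wprod_append)
qed

lemma min_coset_rep_conj_in_gens:
  assumes J: "J \<subseteq> S" and z: "z \<in> carrier G"
    and min: "\<And>g. g \<in> generate G J \<Longrightarrow> word_length z \<le> word_length (z \<otimes> g)"
    and v: "v \<in> generate G J" and s0: "s0 \<in> S" and e: "s0 \<otimes> z = z \<otimes> v"
  shows "v \<in> J"
proof -
  have Jc: "J \<subseteq> carrier G" "\<And>a. a \<in> J \<Longrightarrow> a \<otimes> a = \<one>"
    using J S_subset_carrier S_involution by auto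
  obtain y where y: "y \<in> lists J" "wprod G y = v"
    and y_min: "\<And>y'. y' \<in> lists J \<Longrightarrow> wprod G y' = v \<Longrightarrow> length y \<le> length y'"
    using exists_shortest_word[OF Jc v] by blast
  have "word_length z + length y = word_length (s0 \<otimes> z)"
    using word_length_mult_min_coset_rep[OF J z min y(1)] y y_min e by simp
  also have "\<dots> \<le> word_length z + 1"
    using word_length_mult_S_le[OF s0 z] .
  finally have "length y \<le> 1"
    by simp
  then consider "y = []" | a where "y = [a]"
    by (cases y) auto
  then show ?thesis
  proof cases
    case 1
    then have "v = \<one>"
      using y by simp
    then have "s0 \<otimes> z = \<one> \<otimes> z"
      using e z by simp
    then show ?thesis
      using s0 z S_subset_carrier S_neq_one by (auto simp del: l_one)
  next
    case 2
    then show ?thesis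
      using y Jc by auto
  qed
qed

lemma exists_min_coset_rep:
  obtains g where "g \<in> generate G J"
    "\<And>g'. g' \<in> generate G J \<Longrightarrow> word_length (z \<otimes> g) \<le> word_length (z \<otimes> g')"
  using ex_has_least_nat[of "\<lambda>g. g \<in> generate G J", OF generate.one, of "\<lambda>g. word_length (z \<otimes> g)"]
  by blast

(* A shortest element z = z0 \<otimes> g of the coset z0 W_J works for all h at once. *)
lemma exists_parabolic_conj_to_gens:
  assumes J: "J \<subseteq> S" and z0: "z0 \<in> carrier G"
  obtains g where "g \<in> generate G J"
    "\<And>h. h \<in> generate G J \<Longrightarrow> conj G z0 h \<in> S \<Longrightarrow> conj G (inv g) h \<in> J"
proof -
  define W where "W = generate G J"
  have W: "subgroup W G"
    using J S_subset_carrier by (simp add: W_def generate_is_subgroup)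
  then have W_carrier: "W \<subseteq> carrier G"
    using subgroup.subset by blast
  obtain g where g: "g \<in> W" and g_min: "\<And>g'. g' \<in> W \<Longrightarrow> word_length (z0 \<otimes> g) \<le> word_length (z0 \<otimes> g')"
    using exists_min_coset_rep[where z = z0 and J = J] unfolding W_def by blast
  define z where "z = z0 \<otimes> g"
  have gc: "g \<in> carrier G" "inv g \<in> W"
    using g W W_carrier subgroup.m_inv_closed by auto
  have z: "z \<in> carrier G"
    using z0 gc by (simp add: z_def)
  have z_min: "word_length z \<le> word_length (z \<otimes> g')" if "g' \<in> W" for g'
    using g_min[of "g \<otimes> g'"] subgroup.m_closed[OF W g that] z0 gc that W_carrier
    by (auto simp: z_def m_assoc)
  have "conj G (inv g) h \<in> J" if h: "h \<in> W" "conj G z0 h \<in> S" for h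
  proof -
    have "conj G (inv g) h \<in> W"
      using h gc W by (simp add: subgroup_conj_closed)
    moreover have "conj G z0 h \<otimes> z = z \<otimes> conj G (inv g) h"
      using z0 gc h W_carrier by (auto simp: z_def conj_def m_assoc)
    ultimately show ?thesis
      using min_coset_rep_conj_in_gens[OF J z z_min] h(2) by (simp add: W_def)
  qed
  then show thesis
    using that g by (simp add: W_def)
qed

(* Conjugating by inv y turns the hypotheses into statements about the coset z0 W_J,
   J = {s, t}, with z0 = inv y \<otimes> q. *)
lemma generate_conj_pair_eq:
  assumes st: "s \<in> S" "t \<in> S" and s0t0: "s0 \<in> S" "t0 \<in> S" "s0 \<noteq> t0"
    and q: "q \<in> carrier G" and y: "y \<in> carrier G"
    and in_W: "conj G y s0 \<in> generate G {conj G q s, conj G q t}"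
      "conj G y t0 \<in> generate G {conj G q s, conj G q t}"
  shows "generate G {conj G y s0, conj G y t0} = generate G {conj G q s, conj G q t}"
proof -
  define J where "J = {s, t}"
  define W where "W = generate G J"
  have J: "J \<subseteq> S" "J \<subseteq> carrier G"
    using st S_subset_carrier by (auto simp: J_def)
  have W: "subgroup W G" "W \<subseteq> carrier G"
    using J generate_incl by (simp_all add: W_def generate_is_subgroup)
  have qW: "generate G {conj G q s, conj G q t} = conj G q ` W"
    using generate_conj[OF J(2) q] by (simp add: W_def J_def)
  obtain h0 h1 where h: "h0 \<in> W" "h1 \<in> W" "conj G y s0 = conj G q h0" "conj G y t0 = conj G q h1"
    using in_W by (auto simp: qW)
  have c: "h0 \<in> carrier G" "h1 \<in> carrier G" "s0 \<in> carrier G" "t0 \<in> carrier G"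
    using h W(2) s0t0 S_subset_carrier by auto
  define z0 where "z0 = inv y \<otimes> q"
  have z0: "z0 \<in> carrier G"
    using y q by (simp add: z0_def)
  have "conj G (inv y) (conj G y s0) = conj G z0 h0" "conj G (inv y) (conj G y t0) = conj G z0 h1"
    using y q c by (simp_all add: h z0_def conj_mult)
  then have s0t0_eq: "conj G z0 h0 = s0" "conj G z0 h1 = t0"
    using y c by simp_all
  obtain g where g: "g \<in> W" and to_J: "\<And>h. h \<in> W \<Longrightarrow> conj G z0 h \<in> S \<Longrightarrow> conj G (inv g) h \<in> J"
    using exists_parabolic_conj_to_gens[OF J(1) z0] unfolding W_def by blast
  have gc: "g \<in> carrier G"
    using g W(2) by auto
  have "h0 \<noteq> h1"
    using s0t0_eq s0t0(3) by auto
  then have "J = {conj G (inv g) h0, conj G (inv g) h1}"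
    using to_J[OF h(1)] to_J[OF h(2)] s0t0_eq s0t0 gc c by (auto simp: J_def)
  moreover have "conj G (q \<otimes> g) (conj G (inv g) h0) = conj G y s0"
    "conj G (q \<otimes> g) (conj G (inv g) h1) = conj G y t0"
    using h q gc c by (simp_all add: conj_mult)
  ultimately have "generate G {conj G y s0, conj G y t0} = conj G (q \<otimes> g) ` W"
    using generate_conj[OF J(2), of "q \<otimes> g"] q gc by (simp add: W_def)
  also have "\<dots> = conj G q ` conj G g ` W"
    using q gc W(2) by (auto simp: image_image conj_mult subset_iff intro!: image_cong)
  also have "\<dots> = generate G {conj G q s, conj G q t}"
    using conj_image_subgroup[OF W(1) g] qW by simp
  finally show ?thesis .
qed

lemma set_rho_frakN:
  assumes N: "(u, v) \<in> frakN G S m"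
  shows "set (rho G u v) = {g \<in> generate G {u, v}. odd (word_length g)}"
proof -
  obtain y s t where y: "y \<in> carrier G" and st: "s \<in> S" "t \<in> S" and uv: "u = conj G y s" "v = conj G y t"
    using N by (auto simp: frakN_def frakM_def)
  have c: "u \<in> carrier G" "v \<in> carrier G" "u \<otimes> u = \<one>" "v \<otimes> v = \<one>"
    using frakN_carrier[OF N] frakN_involutions[OF N] by auto
  have odd: "odd (word_length u)" "odd (word_length v)"
    using y st by (simp_all add: uv odd_word_length_conj_S)
  have entry: "odd (word_length ((u \<otimes> v) [^] k \<otimes> u))" for k :: nat
    using c odd even_word_length_pow[of "u \<otimes> v" k] by (simp add: even_word_length_mult)
  show ?thesis
  proof (intro equalityI subsetI)
    fix g assume "g \<in> set (rho G u v)"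
    then show "g \<in> {g \<in> generate G {u, v}. odd (word_length g)}"
      using set_rho_subset_generate[OF c(1,2)] entry by (auto simp: rho_def)
  next
    fix g assume g: "g \<in> {g \<in> generate G {u, v}. odd (word_length g)}"
    have "0 < ord (u \<otimes> v)"
      using two_le_ord_frakN[OF N] by simp
    then obtain k where k: "k < ord (u \<otimes> v)" "g = (u \<otimes> v) [^] k \<or> g = (u \<otimes> v) [^] k \<otimes> u"
      using dihedral_normal_form[OF c] g by blast
    moreover have "even (word_length ((u \<otimes> v) [^] k))"
      using c odd by (simp add: even_word_length_pow even_word_length_mult)
    ultimately have "g = rho G u v ! k"
      using g by (auto simp: nth_rho)
    then show "g \<in> set (rho G u v)"
      using k(1) by simp
  qed
qed

end

section \<open>Reversing a dihedral block\<close>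

context coxeter
begin

(* Two entries of rho G u v in L can be taken consecutive, so u and v lie in the dihedral
   subgroup generated by s' and t'; then both pairs generate it and rho lists its reflections. *)
lemma rho_eq_block_if_meets_twice:
  assumes N: "(u, v) \<in> frakN G S m" and N': "(s', t') \<in> frakN G S m"
    and sub: "subseq (rho G u v) (U @ L @ V)" and d: "distinct (U @ L @ V)"
    and L: "set L = set (rho G s' t')" and meet: "2 \<le> card (set (rho G u v) \<inter> set L)"
  shows "rho G u v = L"
proof -
  obtain i where i: "Suc i < ord (u \<otimes> v)" "rho G u v ! i \<in> set L" "rho G u v ! Suc i \<in> set L"
    using subseq_middle_consecutive[OF sub d meet] by auto
  have c: "u \<in> carrier G" "v \<in> carrier G" "s' \<in> carrier G" "t' \<in> carrier G"
    using frakN_carrier N N' by auto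
  have H: "subgroup (generate G {s', t'}) G"
    using c by (intro generate_is_subgroup) auto
  have "set L \<subseteq> generate G {s', t'}"
    using L set_rho_subset_generate[OF c(3,4)] by simp
  then have uv: "u \<in> generate G {s', t'}" "v \<in> generate G {s', t'}"
    using rho_consecutive_in_subgroup[OF H c(1,2) i(1)] i(2,3) by auto
  obtain y s0 t0 where y: "y \<in> carrier G" "(s0, t0) \<in> frakM S m" "u = conj G y s0" "v = conj G y t0"
    using N by (rule frakNE)
  obtain q s t where q: "q \<in> carrier G" "(s, t) \<in> frakM S m" "s' = conj G q s" "t' = conj G q t"
    using N' by (rule frakNE)
  have "generate G {conj G y s0, conj G y t0} = generate G {conj G q s, conj G q t}"
    by (rule generate_conj_pair_eq) (use y q uv in \<open>auto simp: frakM_def\<close>)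
  then have "generate G {u, v} = generate G {s', t'}"
    using y q by simp
  then have "set (rho G u v) = set L"
    using set_rho_frakN[OF N] set_rho_frakN[OF N'] L by simp
  then show ?thesis
    using subseq_middle_eq[OF sub d] by simp
qed

lemma subseq_rho_block_cases:
  assumes N: "(u, v) \<in> frakN G S m" and N': "(s', t') \<in> frakN G S m"
    and sub: "subseq (rho G u v) (U @ L @ V)" and d: "distinct (U @ L @ V)"
    and L: "set L = set (rho G s' t')" and L': "set L' = set L"
  shows "rho G u v = L \<or> subseq (rho G u v) (U @ L' @ V)"
proof (cases "2 \<le> card (set (rho G u v) \<inter> set L)")
  case True
  then show ?thesis
    using rho_eq_block_if_meets_twice[OF N N' sub d L] by simp
next
  case False
  then show ?thesis
    using subseq_middle_swap[OF sub _ _ L'] d by simp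
qed

lemma rev_rho_frakN: "(u, v) \<in> frakN G S m \<Longrightarrow> rev (rho G u v) = rho G v u"
  using frakN_carrier frakN_involutions by (simp add: rev_rho)

lemma rho_frakN_eq_iff:
  assumes "(u, v) \<in> frakN G S m" "(x, y) \<in> frakN G S m"
  shows "rho G u v = rho G x y \<longleftrightarrow> (u, v) = (x, y)"
  using rho_eq_imp_eq[of u v x y] frakN_carrier[OF assms(1)] frakN_carrier[OF assms(2)]
    two_le_ord_frakN[OF assms(1)]
  by auto

lemma rev_rho_frakN_neq: "(u, v) \<in> frakN G S m \<Longrightarrow> rev (rho G u v) \<noteq> rho G u v"
  using rev_rho_frakN rho_frakN_eq_iff frakN_swap frakN_neq by fastforce

lemma subseq_rho_reverse_block_iff:
  assumes N: "(u, v) \<in> frakN G S m" and N': "(s', t') \<in> frakN G S m"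
    and X: "X = rho G s' t'" and da: "distinct (U @ X @ V)" and db: "distinct (U @ rev X @ V)"
    and ne: "(u, v) \<noteq> (s', t')" "(u, v) \<noteq> (t', s')"
  shows "subseq (rho G u v) (U @ X @ V) \<longleftrightarrow> subseq (rho G u v) (U @ rev X @ V)"
proof -
  have "rho G u v \<noteq> X" "rho G u v \<noteq> rev X"
    using ne rho_frakN_eq_iff[OF N N'] rho_frakN_eq_iff[OF N frakN_swap[OF N']]
    by (simp_all add: X rev_rho_frakN[OF N'])
  moreover have "set X = set (rho G s' t')" "set (rev X) = set (rho G s' t')"
    by (simp_all add: X)
  ultimately show ?thesis
    using subseq_rho_block_cases[OF N N' _ da, of "rev X"] subseq_rho_block_cases[OF N N' _ db, of X]
    by auto
qed

lemma has_reverse_block: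
  assumes N: "(u, v) \<in> frakN G S m" and N': "(s', t') \<in> frakN G S m"
    and X: "X = rho G s' t'" and a: "invs G a = U @ X @ V" and b: "invs G b = U @ rev X @ V"
    and da: "distinct (U @ X @ V)" and db: "distinct (U @ rev X @ V)"
  shows "has G u v b
    = has G u v a - (if (u, v) = (s', t') then 1 else 0) + (if (u, v) = (t', s') then 1 else 0)"
proof -
  have X_neq: "rev X \<noteq> X"
    using rev_rho_frakN_neq[OF N'] by (simp add: X)
  have st_neq: "(s', t') \<noteq> (t', s')"
    using frakN_neq[OF N'] by simp
  consider "(u, v) = (s', t')" | "(u, v) = (t', s')" | "(u, v) \<noteq> (s', t')" "(u, v) \<noteq> (t', s')"
    by blast
  then show ?thesis
  proof cases
    case 1
    then have "rho G u v = X"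
      by (simp add: X)
    moreover have "\<not> subseq X (U @ rev X @ V)"
      using not_subseq_rev_middle[of U "rev X" V] db X_neq by simp
    ultimately have "has G u v a = 1" "has G u v b = 0"
      unfolding has_def a b by (simp_all add: subseq_middle_self)
    then show ?thesis
      using 1 st_neq by simp
  next
    case 2
    then have "rho G u v = rev X"
      by (simp add: X rev_rho_frakN[OF N'])
    then have "has G u v a = 0" "has G u v b = 1"
      unfolding has_def a b using not_subseq_rev_middle[OF da X_neq] by (simp_all add: subseq_middle_self)
    then show ?thesis
      using 2 st_neq by simp
  next
    case 3
    then have iff: "subseq (rho G u v) (U @ X @ V) \<longleftrightarrow> subseq (rho G u v) (U @ rev X @ V)"
      by (rule subseq_rho_reverse_block_iff[OF N N' X da db])
    have "has G u v b = has G u v a"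
      unfolding has_def a b by (simp only: iff)
    then show ?thesis
      unfolding if_not_P[OF 3(1)] if_not_P[OF 3(2)] by simp
  qed
qed

lemma Has_reverse_block:
  assumes N': "(s', t') \<in> frakN G S m"
    and X: "X = rho G s' t'" and a: "invs G a = U @ X @ V" and b: "invs G b = U @ rev X @ V"
    and da: "distinct (U @ X @ V)" and db: "distinct (U @ rev X @ V)"
  shows "Has G S m b
    = (\<lambda>p. Has G S m a p - (if p = (s', t') then 1 else 0) + (if p = (t', s') then 1 else 0))"
proof
  fix p :: "'g \<times> 'g"
  obtain u v where p: "p = (u, v)"
    by fastforce
  show "Has G S m b p = Has G S m a p - (if p = (s', t') then 1 else 0) + (if p = (t', s') then 1 else 0)"
  proof (cases "p \<in> frakN G S m")
    case True
    then show ?thesis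
      using has_reverse_block[OF _ N' X a b da db, of u v] by (simp add: Has_def p)
  next
    case False
    then have "p \<noteq> (s', t')" "p \<noteq> (t', s')"
      using N' frakN_swap[OF N'] by auto
    then show ?thesis
      unfolding if_not_P[OF \<open>p \<noteq> (s', t')\<close>] if_not_P[OF \<open>p \<noteq> (t', s')\<close>]
      using False by (simp add: Has_def p)
  qed
qed

end

lemma coxeter_system_imp_coxeter: "coxeter_system G S m \<Longrightarrow> coxeter G S m"
  by (simp add: coxeter_def coxeter_axioms_def coxeter_system_def)

(* The braid move enters only through its effect repl on the reflection sequences. *)
theorem theorem4p2:
  fixes G :: "('g, 'b) monoid_scheme" and S :: "'g set" and m :: "'g \<Rightarrow> 'g \<Rightarrow> enat"
    and w q s t s' t' :: 'g and a b :: "'g list"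
  assumes cox: "coxeter_system G S m"
    and w: "w \<in> carrier G"
    and st: "(s, t) \<in> frakM S m"
    and ra: "reduced_expr G S a w"
    and rb: "reduced_expr G S b w"
    and bm: "braid_move m s t a b"
    and q: "q \<in> carrier G"
    and repl: "\<exists>u v. invs G a = u @ map (conj G q) (rho G s t) @ v \<and>
                     invs G b = u @ rev (map (conj G q) (rho G s t)) @ v"
    and s': "s' = conj G q s"
    and t': "t' = conj G q t"
  shows "Has G S m b =
    (\<lambda>p. Has G S m a p - (if p = (s', t') then 1 else 0) + (if p = (t', s') then 1 else 0))"
proof -
  interpret coxeter G S m
    using cox by (rule coxeter_system_imp_coxeter)
  have N: "(s', t') \<in> frakN G S m"
    using frakN_conj[OF st q] by (simp add: s' t')
  define X where "X = rho G s' t'"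
  have "map (conj G q) (rho G s t) = X"
    using st q S_subset_carrier by (auto simp: X_def s' t' frakM_def intro: rho_conj)
  then obtain U V where a: "invs G a = U @ X @ V" and b: "invs G b = U @ rev X @ V"
    using repl by auto
  moreover have "distinct (U @ X @ V)" "distinct (U @ rev X @ V)"
    using reduced_expr_distinct_invs[OF ra] reduced_expr_distinct_invs[OF rb] by (simp_all add: a b)
  ultimately show ?thesis
    by (rule Has_reverse_block[OF N X_def])
qed

end
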